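(* Let $N,d,e,s\in\mathbb{N}$ (with $N,d\neq0$) and $\lambda,\lambda'\in\mathbb{Q}$, and let $L\subseteq\mathbb{Q}^2$ be the lattice generated by \[\left(\tfrac1N,\tfrac1N\right),\quad(\lambda,\lambda'),\quad\left(\tfrac ed\lambda+\tfrac{s}{Nd},\ \tfrac ed\lambda'+\tfrac{s}{Nd}\right).\] Let $r$ be any integer such that $r e/\gcd(d,e)\equiv1\pmod{d/\gcd(d,e)}$, and set \[\widetilde\lambda=\frac{\gcd(d,e)}{d}\lambda+\frac{rs}{Nd},\qquad\widetilde\lambda'=\frac{\gcd(d,e)}{d}\lambda'+\frac{rs}{Nd},\qquad\widetilde N=N\frac{\gcd(d,e)}{\gcd(d,e,s)}.\] Then $L$ is generated by $(1/\widetilde N,1/\widetilde N)$ and $(\widetilde\lambda,\widetilde\lambda')$. *)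

theory Defs
  imports Complex_Main "HOL-Number_Theory.Cong"
begin

definition lattice_gen :: "(rat \<times> rat) list \<Rightarrow> (rat \<times> rat) set" where
  "lattice_gen vs = {((\<Sum>i<length vs. of_int (ks i) * fst (vs ! i)),
                      (\<Sum>i<length vs. of_int (ks i) * snd (vs ! i))) | ks :: nat \<Rightarrow> int. True}"

end

theory Submission
  imports Defs
begin

text \<open>Write \<open>h = gcd d (gcd e s)\<close>, \<open>gcd d e = h G\<close>, \<open>d = h G D\<close>, \<open>e = h G E\<close> and \<open>s = h S\<close>; then
  \<open>G\<close> and \<open>S\<close> are coprime and \<open>r E \<equiv> 1 (mod D)\<close>. The linear map
  \<open>(x, y) \<mapsto> x (1, 1) / (N G D) + y (\<lambda>, \<lambda>') / D\<close> sends the integer vectors \<open>(G D, 0)\<close>,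
  \<open>(0, D)\<close>, \<open>(S, E)\<close> to the three given generators and \<open>(D, 0)\<close>, \<open>(r S, 1)\<close> to the two
  claimed ones. So it suffices to show that these two integer lattices coincide, which is an
  explicit change of basis built from Bezout relations \<open>x G + y S = 1\<close> and \<open>r E + k D = 1\<close>.\<close>

lemma lattice_gen_Nil: "lattice_gen [] = {(0, 0)}"
  by (simp add: lattice_gen_def)

lemma lattice_gen_Cons:
  "lattice_gen (v # vs) =
     {(of_int k * fst v + fst u, of_int k * snd v + snd u) | k u. u \<in> lattice_gen vs}"
proof (intro set_eqI iffI)
  fix w assume "w \<in> lattice_gen (v # vs)"
  then obtain ks where "w = ((\<Sum>i<Suc (length vs). of_int (ks i) * fst ((v # vs) ! i)),
                             (\<Sum>i<Suc (length vs). of_int (ks i) * snd ((v # vs) ! i)))"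
    by (auto simp: lattice_gen_def)
  moreover have "((\<Sum>i<length vs. of_int (ks (Suc i)) * fst (vs ! i)),
                   (\<Sum>i<length vs. of_int (ks (Suc i)) * snd (vs ! i))) \<in> lattice_gen vs"
    unfolding lattice_gen_def by (rule CollectI, rule exI[of _ "\<lambda>i. ks (Suc i)"]) simp
  ultimately show "w \<in> {(of_int k * fst v + fst u, of_int k * snd v + snd u) | k u. u \<in> lattice_gen vs}"
    by (intro CollectI exI[of _ "ks 0"])
       (fastforce simp: sum.lessThan_Suc_shift simp del: sum.lessThan_Suc)
next
  fix w assume "w \<in> {(of_int k * fst v + fst u, of_int k * snd v + snd u) | k u. u \<in> lattice_gen vs}"
  then obtain k ks where "w = (of_int k * fst v + (\<Sum>i<length vs. of_int (ks i) * fst (vs ! i)),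
                               of_int k * snd v + (\<Sum>i<length vs. of_int (ks i) * snd (vs ! i)))"
    by (auto simp: lattice_gen_def)
  then show "w \<in> lattice_gen (v # vs)"
    unfolding lattice_gen_def
    by (intro CollectI exI[of _ "case_nat k ks"])
       (simp add: sum.lessThan_Suc_shift del: sum.lessThan_Suc)
qed

lemma lattice_gen_ConsI:
  assumes "u \<in> lattice_gen vs"
    and "w = (of_int k * fst v + fst u, of_int k * snd v + snd u)"
  shows "w \<in> lattice_gen (v # vs)"
  using assms unfolding lattice_gen_Cons by blast

lemma lattice_gen_pairI:
  assumes "w = (of_int a * fst u + of_int b * fst v, of_int a * snd u + of_int b * snd v)"
  shows "w \<in> lattice_gen [u, v]"
proof -
  have "(of_int b * fst v, of_int b * snd v) \<in> lattice_gen [v]"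
    by (rule lattice_gen_ConsI[where k = b and u = "(0, 0)"]) (simp_all add: lattice_gen_Nil)
  then show ?thesis
    by (rule lattice_gen_ConsI[where k = a]) (simp add: assms)
qed

lemma lattice_gen_tripleI:
  assumes "w = (of_int a * fst u + of_int b * fst v + of_int c * fst w',
                of_int a * snd u + of_int b * snd v + of_int c * snd w')"
  shows "w \<in> lattice_gen [u, v, w']"
proof -
  have "(of_int b * fst v + of_int c * fst w', of_int b * snd v + of_int c * snd w')
          \<in> lattice_gen [v, w']"
    by (rule lattice_gen_pairI) simp
  then show ?thesis
    by (rule lattice_gen_ConsI[where k = a]) (simp add: assms add.assoc)
qed

lemma lattice_gen_lincomb:
  assumes "u \<in> lattice_gen vs" and "w \<in> lattice_gen vs"
  shows "(of_int k * fst u + fst w, of_int k * snd u + snd w) \<in> lattice_gen vs"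
proof -
  obtain ks ls where
    "u = ((\<Sum>i<length vs. of_int (ks i) * fst (vs ! i)), (\<Sum>i<length vs. of_int (ks i) * snd (vs ! i)))"
    "w = ((\<Sum>i<length vs. of_int (ls i) * fst (vs ! i)), (\<Sum>i<length vs. of_int (ls i) * snd (vs ! i)))"
    using assms by (auto simp: lattice_gen_def)
  then show ?thesis
    unfolding lattice_gen_def
    by (intro CollectI exI[of _ "\<lambda>i. k * ks i + ls i"])
       (simp add: sum_distrib_left sum.distrib algebra_simps)
qed

lemma lattice_gen_subset:
  assumes "set vs \<subseteq> lattice_gen ws"
  shows "lattice_gen vs \<subseteq> lattice_gen ws"
  using assms
proof (induction vs)
  case Nil
  have "(0, 0) \<in> lattice_gen ws"
    unfolding lattice_gen_def by (rule CollectI, rule exI[of _ "\<lambda>_. 0"]) simp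
  then show ?case
    by (simp add: lattice_gen_Nil)
next
  case (Cons v vs)
  show ?case
  proof
    fix w assume "w \<in> lattice_gen (v # vs)"
    then obtain k u where "u \<in> lattice_gen vs"
      and w: "w = (of_int k * fst v + fst u, of_int k * snd v + snd u)"
      unfolding lattice_gen_Cons by blast
    with Cons have "v \<in> lattice_gen ws" and "u \<in> lattice_gen ws"
      by auto
    then show "w \<in> lattice_gen ws"
      unfolding w by (rule lattice_gen_lincomb)
  qed
qed

lemma lattice_gen_eqI:
  assumes "set vs \<subseteq> lattice_gen ws" and "set ws \<subseteq> lattice_gen vs"
  shows "lattice_gen vs = lattice_gen ws"
  using assms lattice_gen_subset by blast

lemma lattice_gen_map_linear:
  fixes a b c d :: rat
  defines "f \<equiv> \<lambda>(x, y). (a * x + b * y, c * x + d * y)"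
  shows "lattice_gen (map f vs) = f ` lattice_gen vs"
proof (induction vs)
  case Nil
  then show ?case by (simp add: lattice_gen_Nil f_def)
next
  case (Cons v vs)
  have hom: "f (of_int k * fst v + fst u, of_int k * snd v + snd u) =
          (of_int k * fst (f v) + fst (f u), of_int k * snd (f v) + snd (f u))" for k u
    by (simp add: f_def split_beta algebra_simps)
  show ?case
  proof (intro set_eqI iffI)
    fix w assume "w \<in> lattice_gen (map f (v # vs))"
    then obtain k u where u: "u \<in> lattice_gen vs"
      and "w = (of_int k * fst (f v) + fst (f u), of_int k * snd (f v) + snd (f u))"
      unfolding list.map lattice_gen_Cons Cons.IH by blast
    then have "w = f (of_int k * fst v + fst u, of_int k * snd v + snd u)"
      by (simp add: hom)
    moreover have "(of_int k * fst v + fst u, of_int k * snd v + snd u) \<in> lattice_gen (v # vs)"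
      using u unfolding lattice_gen_Cons by blast
    ultimately show "w \<in> f ` lattice_gen (v # vs)"
      by blast
  next
    fix w assume "w \<in> f ` lattice_gen (v # vs)"
    then obtain k u where u: "u \<in> lattice_gen vs"
      and "w = f (of_int k * fst v + fst u, of_int k * snd v + snd u)"
      unfolding lattice_gen_Cons by blast
    then have "w = (of_int k * fst (f v) + fst (f u), of_int k * snd (f v) + snd (f u))"
      by (simp add: hom)
    then show "w \<in> lattice_gen (map f (v # vs))"
      using u unfolding list.map lattice_gen_Cons Cons.IH by blast
  qed
qed

lemma lattice_gen_triple_eq_pair:
  fixes G D E S r :: int
  assumes "coprime G S" and "[r * E = 1] (mod D)"
  shows "lattice_gen [(of_int (G * D), 0), (0, of_int D), (of_int S, of_int E)] =
         lattice_gen [(of_int D, 0), (of_int (r * S), 1)]"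
    (is "lattice_gen ?vs = lattice_gen ?ws")
proof -
  obtain x y where "x * G + y * S = 1"
    using assms(1) bezout_int[of G S] by auto
  then have bezout: "of_int x * of_int G + of_int y * of_int S = (1 :: rat)"
    by (metis of_int_1 of_int_add of_int_mult)
  obtain k where "r * E + D * k = 1"
    using assms(2) unfolding cong_iff_lin by metis
  then have inverse: "of_int r * of_int E + of_int D * of_int k = (1 :: rat)"
    by (metis of_int_1 of_int_add of_int_mult)
  show ?thesis
  proof (rule lattice_gen_eqI)
    have "(of_int (G * D), 0) \<in> lattice_gen ?ws"
      by (rule lattice_gen_pairI[where a = G and b = 0]) simp
    moreover have "(0, of_int D) \<in> lattice_gen ?ws"
      by (rule lattice_gen_pairI[where a = "- r * S" and b = D]) simp
    moreover have "(of_int S, of_int E) \<in> lattice_gen ?ws"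
      by (rule lattice_gen_pairI[where a = "k * S" and b = E]) (insert inverse, simp, algebra)
    ultimately show "set ?vs \<subseteq> lattice_gen ?ws"
      by simp
  next
    have "(of_int D, 0) \<in> lattice_gen ?vs"
      by (rule lattice_gen_tripleI[where a = x and b = "- y * E" and c = "y * D"])
         (insert bezout, simp, algebra)
    moreover have "(of_int (r * S), 1) \<in> lattice_gen ?vs"
      by (rule lattice_gen_tripleI[where a = 0 and b = k and c = r]) (insert inverse, simp, algebra)
    ultimately show "set ?ws \<subseteq> lattice_gen ?vs"
      by simp
  qed
qed

theorem corollary6p2:
  fixes N d e s :: nat and lam lam' :: rat and r :: int
  assumes "N \<noteq> 0" and "d \<noteq> 0"
    and "[r * int (e div gcd d e) = 1] (mod int (d div gcd d e))"
  shows "lattice_gen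
           [(1 / of_nat N, 1 / of_nat N),
            (lam, lam'),
            (of_nat e / of_nat d * lam + of_nat s / (of_nat N * of_nat d),
             of_nat e / of_nat d * lam' + of_nat s / (of_nat N * of_nat d))]
       = lattice_gen
           [(1 / (of_nat N * of_nat (gcd d e) / of_nat (gcd d (gcd e s))),
             1 / (of_nat N * of_nat (gcd d e) / of_nat (gcd d (gcd e s)))),
            (of_nat (gcd d e) / of_nat d * lam + of_int r * of_nat s / (of_nat N * of_nat d),
             of_nat (gcd d e) / of_nat d * lam' + of_int r * of_nat s / (of_nat N * of_nat d))]"
proof -
  define g h where "g = gcd d e" and "h = gcd g s"
  define D E G S where "D = d div g" and "E = e div g" and "G = g div h" and "S = s div h"
  have "g \<noteq> 0"
    using assms(2) by (simp add: g_def)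
  have g: "g = h * G" and s: "s = h * S"
    by (simp_all add: G_def S_def h_def)
  have d: "d = h * G * D" and e: "e = h * G * E"
    by (simp_all add: D_def E_def g_def flip: g)
  have h: "gcd d (gcd e s) = h"
    by (simp add: g_def h_def gcd.assoc)
  have "coprime (int G) (int S)"
    using div_gcd_coprime[of g s] \<open>g \<noteq> 0\<close> by (simp add: G_def S_def h_def)
  moreover have "[r * int E = 1] (mod int D)"
    using assms(3) by (simp add: D_def E_def g_def)
  ultimately have reduced:
    "lattice_gen [(of_int (int G * int D), 0), (0, of_int (int D)), (of_int (int S), of_int (int E))] =
     lattice_gen [(of_int (int D), 0), (of_int (r * int S), 1)]"
    by (rule lattice_gen_triple_eq_pair)
  define embed where "embed = (\<lambda>(x, y). (1 / of_nat (N * G * D) * x + lam / of_nat D * y,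
                                   1 / of_nat (N * G * D) * x + lam' / of_nat D * y :: rat))"
  have nonzero: "N \<noteq> 0" "h \<noteq> 0" "G \<noteq> 0" "D \<noteq> 0"
    using assms(1,2) \<open>g \<noteq> 0\<close> d g by auto
  from reduced have "lattice_gen (map embed [(of_int (int G * int D), 0), (0, of_int (int D)),
                                        (of_int (int S), of_int (int E))]) =
                     lattice_gen (map embed [(of_int (int D), 0), (of_int (r * int S), 1)])"
    by (simp only: embed_def lattice_gen_map_linear)
  then show ?thesis
    unfolding h g_def[symmetric]
    using nonzero by (simp add: embed_def g d e s field_simps)
qed

end
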